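(* Fix $x_0\in(-2,2)$ and $0<\alpha<1$. Let $N\in\mathbb{N}$, $\eta_1,\dots,\eta_N\in\mathbb{C}$ with $\operatorname{Im}\eta_j>0$, $c_1,\dots,c_N\in\mathbb{R}$, $\lambda_j=x_0+\eta_j/n^\alpha$ and $\phi^{(n)}=\frac{1}{n^\alpha}\sum_{j=1}^Nc_ja_{\lambda_j}$. Then $$\lim_{n\to\infty}\operatorname{Tr}H(\phi^{(n)})H(\tilde\phi^{(n)})=-\frac12\sum_{i,j=1}^Nc_ic_j\operatorname{Re}\frac{1}{(\eta_i-\overline{\eta_j})^2},$$ uniformly for $c_j$ in compact subsets of $\mathbb{R}$ and $\eta_j$ in compact subsets of the upper half-plane.
   Context: $\omega(\lambda)=\frac{\lambda-\sqrt{\lambda^2-4}}{2}$ on $\mathbb{C}\setminus[-2,2]$, branch analytic there with $\omega(\lambda)=O(1/\lambda)$ at infinity. For $\operatorname{Im}\lambda>0$, $a_\lambda(z)=\sum_{j\in\mathbb{Z}}\operatorname{Im}\left(\frac{\omega(\lambda)^{|j|}}{\omega(\lambda)-\omega(\lambda)^{-1}}\right)z^j$. For a Laurent series $\phi=\sum\phi_kz^k$, $H(\phi)_{j,k}=\phi_{j+k-1}$ ($j,k\ge1$) is the Hankel matrix and $\tilde\phi(z)=\phi(1/z)$. *)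

theory Defs
  imports "HOL-Analysis.Analysis"
begin

text \<open>omega(lambda) = (lambda - sqrt(lambda^2-4))/2, with the branch of the square root
  analytic on C minus [-2,2] and asymptotic to lambda at infinity:
  sqrt(lambda^2-4) = csqrt(lambda-2) * csqrt(lambda+2).\<close>
definition omega :: "complex \<Rightarrow> complex" where
  "omega l = (l - csqrt (l - 2) * csqrt (l + 2)) / 2"

text \<open>Laurent coefficients of a_lambda(z) = sum_j Im(omega^|j| / (omega - omega^-1)) z^j.\<close>
definition a_coeff :: "complex \<Rightarrow> int \<Rightarrow> real" where
  "a_coeff l j = Im (omega l ^ nat \<bar>j\<bar> / (omega l - inverse (omega l)))"

text \<open>Hankel matrix H(phi)_{j,k} = phi_{j+k-1}, j,k >= 1; here indexed 0-based:
  entry (j,k) with j,k :: nat corresponds to (j+1,k+1).\<close>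
definition hankel :: "(int \<Rightarrow> real) \<Rightarrow> nat \<Rightarrow> nat \<Rightarrow> real" where
  "hankel phi j k = phi (int j + int k + 1)"

definition tilde :: "(int \<Rightarrow> real) \<Rightarrow> int \<Rightarrow> real" where
  "tilde phi k = phi (- k)"

definition trace_HH :: "(int \<Rightarrow> real) \<Rightarrow> (int \<Rightarrow> real) \<Rightarrow> real" where
  "trace_HH phi psi = (\<Sum>j. \<Sum>k. hankel phi j k * hankel psi k j)"

definition phi_n :: "real \<Rightarrow> real \<Rightarrow> nat \<Rightarrow> (nat \<Rightarrow> real) \<Rightarrow> (nat \<Rightarrow> complex) \<Rightarrow> nat \<Rightarrow> int \<Rightarrow> real" where
  "phi_n x0 \<alpha> N c \<eta> n k =
     (1 / real n powr \<alpha>) * (\<Sum>j<N. c j * a_coeff (complex_of_real x0 + \<eta> j / complex_of_real (real n powr \<alpha>)) k)"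

end

theory Submission
  imports Defs
begin

text \<open>For \<open>Im \<lambda> > 0\<close> one has \<open>\<omega>(\<lambda>) - \<omega>(\<lambda>)\<^sup>-\<^sup>1 = -i \<rho>(\<lambda>)\<close> with \<open>\<rho>(\<lambda>)\<^sup>2 = 4 - \<lambda>\<^sup>2\<close>, and
  \<open>|\<omega>(\<lambda>)| < 1\<close>. Hence the coefficients of \<open>\<phi>\<^sup>(\<^sup>n\<^sup>)\<close> are a finite real combination
  \<open>\<Sum> Re (b\<^sub>i \<omega>\<^sub>i\<^sup>|\<^sup>k\<^sup>|)\<close> of geometric sequences, and the Hankel trace is an explicit finite sum of
  terms \<open>\<zeta>/(1 - \<zeta>)\<^sup>2\<close> with \<open>\<zeta> = \<omega>\<^sub>i cnj \<omega>\<^sub>j\<close> or \<open>\<zeta> = \<omega>\<^sub>i \<omega>\<^sub>j\<close>. Writing \<open>t = n\<^sup>-\<^sup>\<alpha>\<close>, it equals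
  \<open>\<Sum> c\<^sub>i c\<^sub>j \<Phi>(t, \<eta>\<^sub>i, \<eta>\<^sub>j)\<close> for a function \<open>\<Phi>\<close> continuous on \<open>[0,1] \<times> K \<times> K\<close>: since
  \<open>|\<omega>(x\<^sub>0)| = 1\<close>, the quotient \<open>(1 - \<omega>\<^sub>i cnj \<omega>\<^sub>j)/t\<close> is a combination of difference quotients of
  \<open>\<omega>\<close> at \<open>x\<^sub>0\<close> and tends to \<open>-\<omega>'(x\<^sub>0) cnj \<omega>(x\<^sub>0) (\<eta>\<^sub>i - cnj \<eta>\<^sub>j)\<close>, while the terms with
  \<open>\<omega>\<^sub>i \<omega>\<^sub>j\<close> carry a factor \<open>t\<^sup>2\<close> over the nonvanishing \<open>1 - \<omega>(x\<^sub>0)\<^sup>2\<close>. Thus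
  \<open>\<Phi>(0, a, b) = -Re (a - cnj b)\<^sup>-\<^sup>2 / 2\<close>, and uniform continuity of \<open>\<Phi>\<close> on the compact set
  gives the uniform convergence.\<close>

text \<open>\<open>rho\<close> is the branch of \<open>sqrt (4 - l\<^sup>2)\<close> analytic off \<open>(-\<infinity>,-2] \<union> [2,\<infinity>)\<close>. Unlike the branch
  \<open>csqrt (l - 2) * csqrt (l + 2)\<close> used in \<open>omega\<close>, it is continuous across \<open>(-2,2)\<close>, so \<open>omega_ext\<close>
  agrees with \<open>omega\<close> on the upper half-plane and is continuous at the real point \<open>x0\<close>.\<close>
definition rho :: "complex \<Rightarrow> complex" where
  "rho l = csqrt (2 - l) * csqrt (2 + l)"

definition omega_ext :: "complex \<Rightarrow> complex" where
  "omega_ext l = (l - \<i> * rho l) / 2"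

definition slit_plane :: "complex set" where
  "slit_plane = {l. Im l \<noteq> 0 \<or> \<bar>Re l\<bar> < 2}"

lemma csqrt_nonreal:
  assumes "Im z \<noteq> 0"
  shows "0 < Re (csqrt z)" and "Im z = 2 * Re (csqrt z) * Im (csqrt z)"
proof -
  have "Im ((csqrt z)\<^sup>2) = 2 * Re (csqrt z) * Im (csqrt z)"
    by (simp only: power2_eq_square times_complex.sel) simp
  then show Im: "Im z = 2 * Re (csqrt z) * Im (csqrt z)" by simp
  show "0 < Re (csqrt z)"
    using Im assms Re_csqrt[of z] by (cases "Re (csqrt z) = 0") auto
qed

lemma csqrt_upper_half_plane:
  assumes "0 < Im z" shows "0 < Re (csqrt z)" "0 < Im (csqrt z)"
  using csqrt_nonreal[of z] assms by (auto simp: zero_less_mult_iff)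

lemma omega_eq_omega_ext:
  assumes "0 < Im l" shows "omega l = omega_ext l"
proof -
  have "csqrt (l - 2) = \<i> * csqrt (2 - l)"
    using csqrt_minus[of "2 - l"] assms by simp
  then show ?thesis by (simp add: omega_def omega_ext_def rho_def add.commute)
qed

lemma omega_ext_upper_half_plane:
  assumes "0 < Im l"
  shows "norm (omega_ext l) < 1" and "rho l \<noteq> 0"
    and "omega_ext l - inverse (omega_ext l) = - \<i> * rho l"
proof -
  define p where "p = csqrt (l - 2)"
  define q where "q = csqrt (l + 2)"
  define s where "s = \<i> * rho l"
  have pq: "0 < Re p" "0 < Im p" "0 < Re q" "0 < Im q"
    using assms csqrt_upper_half_plane[of "l - 2"] csqrt_upper_half_plane[of "l + 2"]
    by (auto simp: p_def q_def)
  have s: "s = p * q"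
    using omega_eq_omega_ext[OF assms] by (simp add: s_def p_def q_def omega_def omega_ext_def)
  have l: "l = (p\<^sup>2 + q\<^sup>2) / 2" by (simp add: p_def q_def)
  have "s\<^sup>2 = (l - 2) * (l + 2)" by (simp add: s power_mult_distrib p_def q_def)
  then have prod: "(l - s) * (l + s) = 4" by (simp add: power2_eq_square algebra_simps)
  show "rho l \<noteq> 0" using s pq by (auto simp: s_def)
  have inv: "inverse ((l - s) / 2) = (l + s) / 2"
    using prod by (intro inverse_unique) (simp add: field_simps)
  show "omega_ext l - inverse (omega_ext l) = - \<i> * rho l"
    unfolding omega_ext_def s_def[symmetric] inv by (simp add: s_def field_simps)
  \<comment> \<open>\<open>|l + s|\<^sup>2 - |l - s|\<^sup>2 = 4 Re (l cnj s) > 0\<close> because \<open>p\<close>, \<open>q\<close> lie in the open first quadrant,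
    and \<open>|l - s| |l + s| = 4\<close>\<close>
  have "Re (l * cnj s) = (cmod p ^ 2 + cmod q ^ 2) * (Re p * Re q + Im p * Im q) / 2"
    unfolding l s cmod_power2 by (simp add: power2_eq_square algebra_simps)
  also have "\<dots> > 0" using pq by (intro divide_pos_pos mult_pos_pos add_pos_pos) auto
  finally have "(cmod (l - s))\<^sup>2 < (cmod (l + s))\<^sup>2"
    unfolding cmod_power2 by (simp add: power2_eq_square algebra_simps)
  then have lt: "cmod (l - s) < cmod (l + s)" by (rule power2_less_imp_less) simp
  have m: "cmod (l - s) * cmod (l + s) = 4" using prod by (metis norm_mult norm_numeral)
  have "cmod (l - s) < 2"
  proof (rule ccontr)
    assume "\<not> cmod (l - s) < 2"
    then have "2 * 2 < cmod (l - s) * cmod (l + s)" using lt by (intro mult_le_less_imp_less) auto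
    then show False using m by simp
  qed
  then show "norm (omega_ext l) < 1" by (simp add: omega_ext_def s_def[symmetric] norm_divide)
qed

lemma a_coeff_upper_half_plane:
  assumes "0 < Im l" shows "a_coeff l k = Re (omega_ext l ^ nat \<bar>k\<bar> / rho l)"
proof -
  have "a_coeff l k = Im (omega_ext l ^ nat \<bar>k\<bar> / (- \<i> * rho l))"
    using omega_ext_upper_half_plane(3)[OF assms] by (simp add: a_coeff_def omega_eq_omega_ext[OF assms])
  also have "omega_ext l ^ nat \<bar>k\<bar> / (- \<i> * rho l) = \<i> * (omega_ext l ^ nat \<bar>k\<bar> / rho l)"
    using omega_ext_upper_half_plane(2)[OF assms] by (simp add: field_simps)
  finally show ?thesis by (simp only: Im_i_times)
qed

lemma slit_plane_csqrt_args:
  assumes "l \<in> slit_plane" shows "2 - l \<notin> \<real>\<^sub>\<le>\<^sub>0" "2 + l \<notin> \<real>\<^sub>\<le>\<^sub>0"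
  using assms by (auto simp: slit_plane_def complex_nonpos_Reals_iff)

lemma isCont_rho:
  assumes "l \<in> slit_plane" shows "isCont rho l"
  unfolding rho_def[abs_def] using slit_plane_csqrt_args[OF assms]
  by (intro continuous_intros isCont_csqrt') auto

lemma isCont_omega_ext:
  assumes "l \<in> slit_plane" shows "isCont omega_ext l"
  unfolding omega_ext_def[abs_def] using isCont_rho[OF assms] by (intro continuous_intros) auto

lemma isCont_rho':
  "isCont f p \<Longrightarrow> f p \<in> slit_plane \<Longrightarrow> isCont (\<lambda>x. rho (f x)) p"
  by (rule isCont_o2[OF _ isCont_rho])

lemma isCont_omega_ext':
  "isCont f p \<Longrightarrow> f p \<in> slit_plane \<Longrightarrow> isCont (\<lambda>x. omega_ext (f x)) p"
  by (rule isCont_o2[OF _ isCont_omega_ext])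

lemma omega_ext_has_field_derivative:
  assumes "l \<in> slit_plane"
  shows "(omega_ext has_field_derivative \<i> * omega_ext l / rho l) (at l)"
proof -
  define p where "p = csqrt (2 - l)"
  define q where "q = csqrt (2 + l)"
  note args = slit_plane_csqrt_args[OF assms]
  have pq: "p \<noteq> 0" "q \<noteq> 0" "p\<^sup>2 = 2 - l" "q\<^sup>2 = 2 + l"
    using args by (auto simp: p_def q_def)
  have drho: "(rho has_field_derivative - 1 / (2 * p) * q + p * (1 / (2 * q))) (at l)"
    unfolding rho_def[abs_def] p_def q_def
    by (rule derivative_eq_intros refl | use args in simp)+
  have "(omega_ext has_field_derivative (1 - \<i> * (- 1 / (2 * p) * q + p * (1 / (2 * q)))) / 2) (at l)"
    unfolding omega_ext_def[abs_def] by (rule derivative_eq_intros drho refl | simp)+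
  moreover have "(1 - \<i> * (- 1 / (2 * p) * q + p * (1 / (2 * q)))) / 2 = \<i> * omega_ext l / rho l"
  proof -
    have "- 1 / (2 * p) * q + p * (1 / (2 * q)) = (p\<^sup>2 - q\<^sup>2) / (2 * (p * q))"
      using pq by (simp add: field_simps power2_eq_square)
    also have "p\<^sup>2 - q\<^sup>2 = - 2 * l" using pq by simp
    finally have d: "- 1 / (2 * p) * q + p * (1 / (2 * q)) = - l / (p * q)"
      using pq by (simp add: field_simps)
    have "rho l = p * q" by (simp add: rho_def p_def q_def)
    then show ?thesis unfolding d using pq by (simp add: omega_ext_def field_simps)
  qed
  ultimately show ?thesis by simp
qed

lemma rho_real:
  assumes "\<bar>x\<bar> < 2" shows "rho (of_real x) = of_real (sqrt (4 - x\<^sup>2))" and "0 < sqrt (4 - x\<^sup>2)"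
proof -
  have "rho (of_real x) = of_real (sqrt (2 - x) * sqrt (2 + x))"
    using csqrt_of_real[of "2 - x"] csqrt_of_real[of "2 + x"] assms by (simp add: rho_def)
  also have "sqrt (2 - x) * sqrt (2 + x) = sqrt (4 - x\<^sup>2)"
    unfolding real_sqrt_mult[symmetric] by (simp add: power2_eq_square algebra_simps)
  finally show "rho (of_real x) = of_real (sqrt (4 - x\<^sup>2))" .
  have "x\<^sup>2 < 4" using assms abs_square_less_1[of "x / 2"] by (simp add: power_divide)
  then show "0 < sqrt (4 - x\<^sup>2)" by simp
qed

lemma omega_ext_real:
  assumes "\<bar>x\<bar> < 2"
  shows "omega_ext (of_real x) * cnj (omega_ext (of_real x)) = 1"
    and "1 - omega_ext (of_real x) * omega_ext (of_real x) \<noteq> 0"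
proof -
  define r where "r = sqrt (4 - x\<^sup>2)"
  have r: "r\<^sup>2 = 4 - x\<^sup>2" "0 < r" using rho_real(2)[OF assms] by (simp_all add: r_def)
  have w: "omega_ext (of_real x) = (of_real x - \<i> * of_real r) / 2"
    by (simp add: omega_ext_def rho_real(1)[OF assms] r_def)
  show "omega_ext (of_real x) * cnj (omega_ext (of_real x)) = 1"
    unfolding w using r(1) by (simp add: complex_eq_iff power2_eq_square algebra_simps)
  have "Im (omega_ext (of_real x)) \<noteq> 0" unfolding w using r(2) by simp
  then show "1 - omega_ext (of_real x) * omega_ext (of_real x) \<noteq> 0"
    using square_eq_1_iff[of "omega_ext (of_real x)"] by auto
qed

lemma double_geometric_sums:
  fixes z :: "'a::real_normed_field"
  assumes "norm z < 1"
  shows "(\<lambda>k. z ^ (j + k + 1)) sums (z ^ (j + 1) / (1 - z))"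
    and "(\<lambda>j. z ^ (j + 1) / (1 - z)) sums (z / (1 - z)\<^sup>2)"
proof -
  have "(\<lambda>k. z ^ (j + 1) * z ^ k) sums (z ^ (j + 1) * (1 / (1 - z)))"
    by (intro sums_mult geometric_sums assms)
  then show "(\<lambda>k. z ^ (j + k + 1)) sums (z ^ (j + 1) / (1 - z))"
    by (simp add: power_add mult_ac)
  have "(\<lambda>j. (z / (1 - z)) * z ^ j) sums ((z / (1 - z)) * (1 / (1 - z)))"
    by (intro sums_mult geometric_sums assms)
  then show "(\<lambda>j. z ^ (j + 1) / (1 - z)) sums (z / (1 - z)\<^sup>2)"
    by (simp add: power2_eq_square mult_ac)
qed

lemma trace_HH_tilde_geometric:
  fixes b z :: "'i \<Rightarrow> complex"
  assumes "finite I" and z: "\<And>i. i \<in> I \<Longrightarrow> norm (z i) < 1"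
    and phi: "\<And>k. phi k = (\<Sum>i\<in>I. Re (b i * z i ^ nat \<bar>k\<bar>))"
  shows "trace_HH phi (tilde phi) =
    (\<Sum>i\<in>I. \<Sum>l\<in>I. Re (b i * cnj (b l) * (z i * cnj (z l) / (1 - z i * cnj (z l))\<^sup>2)
                       + b i * b l * (z i * z l / (1 - z i * z l)\<^sup>2)) / 2)"
proof -
  define U where "U p = b (fst p) * cnj (b (snd p))" for p
  define V where "V p = b (fst p) * b (snd p)" for p
  define u where "u p = z (fst p) * cnj (z (snd p))" for p
  define v where "v p = z (fst p) * z (snd p)" for p
  have uv: "norm (u p) < 1" "norm (v p) < 1" if "p \<in> I \<times> I" for p
  proof -
    have "norm (z (fst p)) * norm (z (snd p)) < 1 * 1"
      using z that by (intro mult_strict_mono) auto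
    then show "norm (u p) < 1" "norm (v p) < 1" by (simp_all add: u_def v_def norm_mult)
  qed
  have hankel_product: "hankel phi j k * hankel (tilde phi) k j =
      (\<Sum>p\<in>I \<times> I. Re (U p * u p ^ (j + k + 1)) + Re (V p * v p ^ (j + k + 1))) / 2" for j k
  proof -
    define m where "m = j + k + 1"
    define x where "x i = b i * z i ^ m" for i
    have "nat \<bar>int j + int k + 1\<bar> = m" "nat \<bar>- (int k + int j + 1)\<bar> = m"
      unfolding m_def by arith+
    then have "hankel phi j k = (\<Sum>i\<in>I. Re (x i))" "hankel (tilde phi) k j = (\<Sum>i\<in>I. Re (x i))"
      unfolding hankel_def tilde_def phi x_def by simp_all
    then have "hankel phi j k * hankel (tilde phi) k j = (\<Sum>p\<in>I \<times> I. Re (x (fst p)) * Re (x (snd p)))"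
      by (simp add: sum_product sum.cartesian_product case_prod_beta)
    also have "\<dots> = (\<Sum>p\<in>I \<times> I. Re (U p * u p ^ m) + Re (V p * v p ^ m)) / 2"
      unfolding sum_divide_distrib
    proof (intro sum.cong refl)
      fix p
      have "x (fst p) * cnj (x (snd p)) = U p * u p ^ m" "x (fst p) * x (snd p) = V p * v p ^ m"
        by (simp_all add: x_def U_def V_def u_def v_def power_mult_distrib mult_ac)
      moreover have "Re (x (fst p)) * Re (x (snd p)) =
          (Re (x (fst p) * cnj (x (snd p))) + Re (x (fst p) * x (snd p))) / 2"
        by (simp add: algebra_simps)
      ultimately show "Re (x (fst p)) * Re (x (snd p)) = (Re (U p * u p ^ m) + Re (V p * v p ^ m)) / 2"
        by simp
    qed
    finally show ?thesis by (simp add: m_def)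
  qed
  have inner: "(\<lambda>k. hankel phi j k * hankel (tilde phi) k j) sums
      ((\<Sum>p\<in>I \<times> I. Re (U p * (u p ^ (j + 1) / (1 - u p))) + Re (V p * (v p ^ (j + 1) / (1 - v p)))) / 2)" for j
    unfolding hankel_product using uv
    by (intro sums_divide sums_sum sums_add sums_Re sums_mult double_geometric_sums) auto
  have outer: "(\<lambda>j. (\<Sum>p\<in>I \<times> I. Re (U p * (u p ^ (j + 1) / (1 - u p))) + Re (V p * (v p ^ (j + 1) / (1 - v p)))) / 2)
      sums ((\<Sum>p\<in>I \<times> I. Re (U p * (u p / (1 - u p)\<^sup>2)) + Re (V p * (v p / (1 - v p)\<^sup>2))) / 2)"
    using uv by (intro sums_divide sums_sum sums_add sums_Re sums_mult double_geometric_sums) auto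
  have "trace_HH phi (tilde phi) = (\<Sum>p\<in>I \<times> I. Re (U p * (u p / (1 - u p)\<^sup>2)) + Re (V p * (v p / (1 - v p)\<^sup>2))) / 2"
    unfolding trace_HH_def sums_unique[OF inner, symmetric] by (rule sums_unique[OF outer, symmetric])
  then show ?thesis
    by (simp add: sum.cartesian_product case_prod_beta sum_divide_distrib U_def V_def u_def v_def mult.assoc)
qed

text \<open>\<open>lam x0 t \<eta>\<^sub>j\<close> is the spectral parameter \<open>\<lambda>\<^sub>j = x0 + \<eta>\<^sub>j / n\<^sup>\<alpha>\<close> with \<open>t = n\<^sup>-\<^sup>\<alpha>\<close>.\<close>
definition lam :: "real \<Rightarrow> real \<Rightarrow> complex \<Rightarrow> complex" where
  "lam x0 t a = of_real x0 + of_real t * a"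

lemma isCont_lam [continuous_intros]:
  "isCont f p \<Longrightarrow> isCont g p \<Longrightarrow> isCont (\<lambda>x. lam x0 (f x) (g x)) p"
  unfolding lam_def by (intro continuous_intros)

lemma lam_mem_slit_plane:
  assumes "\<bar>x0\<bar> < 2" "0 \<le> t" "0 < Im a" shows "lam x0 t a \<in> slit_plane"
  using assms by (cases "t = 0") (auto simp: lam_def slit_plane_def)

definition omega_dq :: "real \<Rightarrow> complex \<Rightarrow> complex" where
  "omega_dq x0 h =
     (if h = 0 then \<i> * omega_ext (of_real x0) / rho (of_real x0)
      else (omega_ext (of_real x0 + h) - omega_ext (of_real x0)) / h)"

lemma isCont_omega_dq:
  assumes "\<bar>x0\<bar> < 2" "h = 0 \<or> 0 < Im h" shows "isCont (omega_dq x0) h"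
proof (cases "h = 0")
  case True
  have "of_real x0 \<in> slit_plane" using assms(1) by (simp add: slit_plane_def)
  from omega_ext_has_field_derivative[OF this]
  have "((\<lambda>h. (omega_ext (of_real x0 + h) - omega_ext (of_real x0)) / h) \<longlongrightarrow> omega_dq x0 0) (at 0)"
    unfolding DERIV_def by (simp add: omega_dq_def)
  moreover have "eventually (\<lambda>h. (omega_ext (of_real x0 + h) - omega_ext (of_real x0)) / h = omega_dq x0 h) (at 0)"
    unfolding eventually_at_filter by (simp add: omega_dq_def)
  ultimately have "(omega_dq x0 \<longlongrightarrow> omega_dq x0 0) (at 0)" using tendsto_cong by force
  then show ?thesis using True by (simp add: continuous_at)
next
  case False
  have ev: "eventually (\<lambda>y. (omega_ext (of_real x0 + y) - omega_ext (of_real x0)) / y = omega_dq x0 y) (nhds h)"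
    using t1_space_nhds[OF False] by (rule eventually_mono) (simp add: omega_dq_def)
  have "of_real x0 + h \<in> slit_plane" using False assms(2) by (simp add: slit_plane_def)
  then have "isCont (\<lambda>y. (omega_ext (of_real x0 + y) - omega_ext (of_real x0)) / y) h"
    using False by (intro continuous_intros isCont_omega_ext') auto
  then show ?thesis using isCont_cong[OF ev] by simp
qed

lemma isCont_omega_dq':
  "\<bar>x0\<bar> < 2 \<Longrightarrow> isCont f p \<Longrightarrow> f p = 0 \<or> 0 < Im (f p) \<Longrightarrow> isCont (\<lambda>x. omega_dq x0 (f x)) p"
  by (rule isCont_o2[OF _ isCont_omega_dq])

text \<open>Since \<open>|omega_ext x0| = 1\<close>, for \<open>t > 0\<close> the scaled gap is
  \<open>(1 - omega_ext (lam x0 t a) * cnj (omega_ext (lam x0 t b))) / t\<close> (\<open>scaled_gap_eq\<close>);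
  written with difference quotients it stays continuous at \<open>t = 0\<close>.\<close>
definition scaled_gap :: "real \<Rightarrow> real \<Rightarrow> complex \<Rightarrow> complex \<Rightarrow> complex" where
  "scaled_gap x0 t a b =
     - (a * omega_dq x0 (of_real t * a) * cnj (omega_ext (lam x0 t b))
        + omega_ext (of_real x0) * cnj (b * omega_dq x0 (of_real t * b)))"

definition trace_kernel :: "real \<Rightarrow> real \<Rightarrow> complex \<Rightarrow> complex \<Rightarrow> real" where
  "trace_kernel x0 t a b =
     Re (omega_ext (lam x0 t a) * cnj (omega_ext (lam x0 t b))
           / (rho (lam x0 t a) * cnj (rho (lam x0 t b)) * (scaled_gap x0 t a b)\<^sup>2)
         + of_real (t\<^sup>2) * (omega_ext (lam x0 t a) * omega_ext (lam x0 t b))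
           / (rho (lam x0 t a) * rho (lam x0 t b) * (1 - omega_ext (lam x0 t a) * omega_ext (lam x0 t b))\<^sup>2))
     / 2"

lemma scaled_gap_eq:
  assumes "\<bar>x0\<bar> < 2" "0 < t" "a \<noteq> 0" "b \<noteq> 0"
  shows "scaled_gap x0 t a b = (1 - omega_ext (lam x0 t a) * cnj (omega_ext (lam x0 t b))) / of_real t"
proof -
  have "scaled_gap x0 t a b =
      - ((omega_ext (lam x0 t a) - omega_ext (of_real x0)) / of_real t * cnj (omega_ext (lam x0 t b))
         + omega_ext (of_real x0) * cnj ((omega_ext (lam x0 t b) - omega_ext (of_real x0)) / of_real t))"
    using assms by (simp add: scaled_gap_def omega_dq_def lam_def field_simps)
  also have "\<dots> = (omega_ext (of_real x0) * cnj (omega_ext (of_real x0))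
                   - omega_ext (lam x0 t a) * cnj (omega_ext (lam x0 t b))) / of_real t"
    using assms by (simp add: field_simps)
  finally show ?thesis using omega_ext_real(1)[OF assms(1)] by simp
qed

lemma scaled_gap_at_0:
  assumes "\<bar>x0\<bar> < 2" shows "scaled_gap x0 0 a b = - (\<i> / rho (of_real x0)) * (a - cnj b)"
proof -
  have r: "cnj (rho (of_real x0)) = rho (of_real x0)" "rho (of_real x0) \<noteq> 0"
    using rho_real[OF assms] by simp_all
  have "scaled_gap x0 0 a b = - (\<i> / rho (of_real x0)) *
      (a - cnj b) * (omega_ext (of_real x0) * cnj (omega_ext (of_real x0)))"
    using r by (simp add: scaled_gap_def omega_dq_def lam_def field_simps)
  then show ?thesis using omega_ext_real(1)[OF assms] by simp
qed

lemma trace_kernel_at_0: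
  assumes "\<bar>x0\<bar> < 2" shows "trace_kernel x0 0 a b = - (1/2) * Re (1 / (a - cnj b)\<^sup>2)"
proof -
  have r: "cnj (rho (of_real x0)) = rho (of_real x0)" "rho (of_real x0) \<noteq> 0"
    using rho_real[OF assms] by simp_all
  have "rho (of_real x0) * cnj (rho (of_real x0)) * (scaled_gap x0 0 a b)\<^sup>2 = - ((a - cnj b)\<^sup>2)"
    unfolding scaled_gap_at_0[OF assms] r(1) using r(2) by (simp add: field_simps power2_eq_square)
  then show ?thesis
    by (simp add: trace_kernel_def lam_def omega_ext_real(1)[OF assms])
qed

lemma unit_disc_products_ne_1:
  fixes u v :: complex
  assumes "norm u < 1" "norm v < 1"
  shows "u * v \<noteq> 1" and "u * cnj v \<noteq> 1"
proof -
  have "norm u * norm v < 1 * 1" using assms by (intro mult_strict_mono) auto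
  then show "u * v \<noteq> 1" "u * cnj v \<noteq> 1" by (auto simp: norm_mult dest: arg_cong[where f = norm])
qed

lemma trace_kernel_denominators_nonzero:
  assumes "\<bar>x0\<bar> < 2" "0 \<le> t" "0 < Im a" "0 < Im b"
  shows "rho (lam x0 t a) \<noteq> 0" and "scaled_gap x0 t a b \<noteq> 0"
    and "1 - omega_ext (lam x0 t a) * omega_ext (lam x0 t b) \<noteq> 0"
proof -
  consider "t = 0" | "0 < t" using assms(2) by linarith
  then have "rho (lam x0 t a) \<noteq> 0 \<and> scaled_gap x0 t a b \<noteq> 0
      \<and> 1 - omega_ext (lam x0 t a) * omega_ext (lam x0 t b) \<noteq> 0"
  proof cases
    case 1
    have "0 < Im (a - cnj b)" using assms by simp
    then show ?thesis
      using 1 rho_real[OF assms(1)] omega_ext_real(2)[OF assms(1)] scaled_gap_at_0[OF assms(1)]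
      by (auto simp: lam_def)
  next
    case 2
    then have Im: "0 < Im (lam x0 t a)" "0 < Im (lam x0 t b)" using assms by (simp_all add: lam_def)
    have "omega_ext (lam x0 t a) * omega_ext (lam x0 t b) \<noteq> 1"
      "omega_ext (lam x0 t a) * cnj (omega_ext (lam x0 t b)) \<noteq> 1"
      using unit_disc_products_ne_1 omega_ext_upper_half_plane(1) Im by blast+
    moreover have "a \<noteq> 0" "b \<noteq> 0" using assms by auto
    ultimately show ?thesis
      using 2 omega_ext_upper_half_plane(2)[OF Im(1)] scaled_gap_eq[OF assms(1)] by auto
  qed
  then show "rho (lam x0 t a) \<noteq> 0" "scaled_gap x0 t a b \<noteq> 0"
    "1 - omega_ext (lam x0 t a) * omega_ext (lam x0 t b) \<noteq> 0" by blast+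
qed

lemma isCont_trace_kernel:
  assumes "\<bar>x0\<bar> < 2" "0 \<le> t" "0 < Im a" "0 < Im b"
  shows "isCont (\<lambda>p. trace_kernel x0 (fst p) (fst (snd p)) (snd (snd p))) (t, a, b)"
proof -
  have dq: "of_real t * c = 0 \<or> 0 < Im (of_real t * c)" if "0 < Im c" for c
    using assms(2) that by (cases "t = 0") auto
  have "isCont (\<lambda>p. scaled_gap x0 (fst p) (fst (snd p)) (snd (snd p))) (t, a, b)"
    unfolding scaled_gap_def using lam_mem_slit_plane[OF assms(1,2)] assms(3,4) dq
    by (intro continuous_intros isCont_omega_ext' isCont_omega_dq'[OF assms(1)]) auto
  then show ?thesis
    unfolding trace_kernel_def
    using lam_mem_slit_plane[OF assms(1,2)] assms(3,4)
      trace_kernel_denominators_nonzero[OF assms] trace_kernel_denominators_nonzero(1)[OF assms(1,2,4,3)]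
    by (intro continuous_intros continuous_Re isCont_rho' isCont_omega_ext') auto
qed

lemma trace_HH_phi_n_eq:
  assumes "\<bar>x0\<bar> < 2" "1 \<le> n" "\<And>j. j < N \<Longrightarrow> 0 < Im (\<eta> j)"
  shows "trace_HH (phi_n x0 \<alpha> N c \<eta> n) (tilde (phi_n x0 \<alpha> N c \<eta> n))
       = (\<Sum>i<N. \<Sum>j<N. c i * c j * trace_kernel x0 (1 / real n powr \<alpha>) (\<eta> i) (\<eta> j))"
proof -
  define t where "t = 1 / real n powr \<alpha>"
  define w where "w i = omega_ext (lam x0 t (\<eta> i))" for i
  define r where "r i = rho (lam x0 t (\<eta> i))" for i
  have t: "0 < t" using assms(2) by (simp add: t_def)
  have Im: "0 < Im (lam x0 t (\<eta> i))" if "i < N" for i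
    using assms(3) that t by (simp add: lam_def)
  have phi: "phi_n x0 \<alpha> N c \<eta> n k = (\<Sum>i<N. Re (of_real (t * c i) / r i * w i ^ nat \<bar>k\<bar>))" for k
  proof -
    have "\<eta> i / of_real (real n powr \<alpha>) = of_real t * \<eta> i" for i
      by (simp add: t_def field_simps)
    then have "phi_n x0 \<alpha> N c \<eta> n k = t * (\<Sum>i<N. c i * a_coeff (lam x0 t (\<eta> i)) k)"
      by (simp add: phi_n_def lam_def t_def)
    also have "\<dots> = (\<Sum>i<N. Re (of_real (t * c i) / r i * w i ^ nat \<bar>k\<bar>))"
      unfolding sum_distrib_left
    proof (intro sum.cong refl)
      fix i assume "i \<in> {..<N}"
      have "of_real (t * c i) / r i * w i ^ nat \<bar>k\<bar> = of_real (t * c i) * (w i ^ nat \<bar>k\<bar> / r i)"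
        by (simp add: divide_inverse mult_ac)
      moreover have "Re (of_real (t * c i) * (w i ^ nat \<bar>k\<bar> / r i)) = t * c i * Re (w i ^ nat \<bar>k\<bar> / r i)"
        by (simp only: times_complex.sel Re_complex_of_real Im_complex_of_real mult_zero_left diff_zero)
      ultimately show "t * (c i * a_coeff (lam x0 t (\<eta> i)) k) = Re (of_real (t * c i) / r i * w i ^ nat \<bar>k\<bar>)"
        using \<open>i \<in> {..<N}\<close> Im by (simp add: a_coeff_upper_half_plane r_def w_def)
    qed
    finally show ?thesis .
  qed
  have w: "norm (w i) < 1" if "i \<in> {..<N}" for i
    using omega_ext_upper_half_plane(1) Im that by (simp add: w_def)
  have "trace_HH (phi_n x0 \<alpha> N c \<eta> n) (tilde (phi_n x0 \<alpha> N c \<eta> n))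
      = (\<Sum>i<N. \<Sum>l<N. Re (of_real (t * c i) / r i * cnj (of_real (t * c l) / r l)
                * (w i * cnj (w l) / (1 - w i * cnj (w l))\<^sup>2)
            + of_real (t * c i) / r i * (of_real (t * c l) / r l) * (w i * w l / (1 - w i * w l)\<^sup>2)) / 2)"
    by (rule trace_HH_tilde_geometric[OF finite_lessThan w phi])
  also have "\<dots> = (\<Sum>i<N. \<Sum>l<N. c i * c l * trace_kernel x0 t (\<eta> i) (\<eta> l))"
  proof (intro sum.cong refl)
    fix i l assume "i \<in> {..<N}" "l \<in> {..<N}"
    then have il: "i < N" "l < N" by auto
    have nz: "r i \<noteq> 0" "r l \<noteq> 0" "scaled_gap x0 t (\<eta> i) (\<eta> l) \<noteq> 0" "1 - w i * w l \<noteq> 0"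
      using trace_kernel_denominators_nonzero[OF assms(1) _ assms(3) assms(3)] il t
      by (auto simp: r_def w_def)
    have "\<eta> i \<noteq> 0" "\<eta> l \<noteq> 0" using assms(3) il by fastforce+
    then have gap: "1 - w i * cnj (w l) = of_real t * scaled_gap x0 t (\<eta> i) (\<eta> l)"
      using scaled_gap_eq[OF assms(1) t] t by (simp add: w_def)
    define K1 where "K1 = w i * cnj (w l) / (r i * cnj (r l) * (scaled_gap x0 t (\<eta> i) (\<eta> l))\<^sup>2)"
    define K2 where "K2 = of_real (t\<^sup>2) * (w i * w l) / (r i * r l * (1 - w i * w l)\<^sup>2)"
    have "of_real (t * c i) / r i * cnj (of_real (t * c l) / r l) * (w i * cnj (w l) / (1 - w i * cnj (w l))\<^sup>2)
        = of_real (c i * c l) * K1"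
      unfolding gap K1_def using nz t by (simp add: field_simps power2_eq_square)
    moreover have "of_real (t * c i) / r i * (of_real (t * c l) / r l) * (w i * w l / (1 - w i * w l)\<^sup>2)
        = of_real (c i * c l) * K2"
      unfolding K2_def using nz t by (simp add: field_simps power2_eq_square)
    moreover have "trace_kernel x0 t (\<eta> i) (\<eta> l) = Re (K1 + K2) / 2"
      by (simp add: trace_kernel_def K1_def K2_def w_def r_def)
    moreover have "Re (of_real x * K1 + of_real x * K2) = x * Re (K1 + K2)" for x
      by (simp add: distrib_left)
    ultimately show "Re (of_real (t * c i) / r i * cnj (of_real (t * c l) / r l)
                * (w i * cnj (w l) / (1 - w i * cnj (w l))\<^sup>2)
            + of_real (t * c i) / r i * (of_real (t * c l) / r l) * (w i * w l / (1 - w i * w l)\<^sup>2)) / 2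
        = c i * c l * trace_kernel x0 t (\<eta> i) (\<eta> l)"
      by simp
  qed
  finally show ?thesis by (simp add: t_def)
qed

lemma uniform_limit_sum:
  fixes f :: "'i \<Rightarrow> 'b \<Rightarrow> 'a \<Rightarrow> 'c::real_normed_vector"
  assumes "finite I" "\<And>i. i \<in> I \<Longrightarrow> uniform_limit X (f i) (l i) F"
  shows "uniform_limit X (\<lambda>n x. \<Sum>i\<in>I. f i n x) (\<lambda>x. \<Sum>i\<in>I. l i x) F"
  using assms by (induction I rule: finite_induct) (auto intro: uniform_limit_add uniform_limit_const)

lemma uniform_limit_parameter:
  fixes f :: "'p::metric_space \<times> 'a::metric_space \<Rightarrow> 'c::metric_space"
  assumes "compact T" "compact S" "continuous_on (T \<times> S) f" "t0 \<in> T"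
    and "(t \<longlongrightarrow> t0) F" "eventually (\<lambda>n. t n \<in> T) F"
  shows "uniform_limit S (\<lambda>n x. f (t n, x)) (\<lambda>x. f (t0, x)) F"
proof -
  have "uniform_limit S (\<lambda>n x. (t n, x)) (\<lambda>x. (t0, x)) F"
  proof (rule uniform_limitI)
    fix e :: real assume "0 < e"
    with assms(5) have "eventually (\<lambda>n. dist (t n) t0 < e) F" by (rule tendstoD)
    then show "eventually (\<lambda>n. \<forall>x\<in>S. dist (t n, x) (t0, x) < e) F"
      by eventually_elim (simp add: dist_Pair_Pair)
  qed
  moreover have "uniformly_continuous_on (T \<times> S) f"
    using assms(1-3) by (intro compact_uniformly_continuous compact_Times)
  moreover have "eventually (\<lambda>n. (\<lambda>x. (t n, x)) ` S \<subseteq> T \<times> S) F"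
    using assms(6) by eventually_elim auto
  ultimately show ?thesis
    using uniform_limit_compose[where U = "T \<times> S" and f = f] assms(4) by (auto simp: o_def)
qed

lemma uniform_limit_kernel_quadratic_form:
  fixes g :: "real \<times> 'a::metric_space \<times> 'a \<Rightarrow> real" and N :: nat
  assumes "compact C" "compact K" "continuous_on ({0..1} \<times> (K \<times> K)) g"
    and "(t \<longlongrightarrow> 0) F" "eventually (\<lambda>n. t n \<in> {0..1}) F"
  shows "uniform_limit {(c, \<eta>). \<forall>j<N. c j \<in> C \<and> \<eta> j \<in> K}
           (\<lambda>n (c, \<eta>). \<Sum>i<N. \<Sum>j<N. c i * c j * g (t n, \<eta> i, \<eta> j))
           (\<lambda>(c, \<eta>). \<Sum>i<N. \<Sum>j<N. c i * c j * g (0, \<eta> i, \<eta> j)) F"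
proof -
  define D where "D = {(c, \<eta>). \<forall>j<N. c j \<in> C \<and> (\<eta> j :: 'a) \<in> K}"
  have summand: "uniform_limit D (\<lambda>n (c, \<eta>). c i * c j * g (t n, \<eta> i, \<eta> j))
                (\<lambda>(c, \<eta>). c i * c j * g (0, \<eta> i, \<eta> j)) F" if "i < N" "j < N" for i j
  proof -
    have "uniform_limit (K \<times> K) (\<lambda>n p. g (t n, p)) (\<lambda>p. g (0, p)) F"
      using assms by (intro uniform_limit_parameter[where T = "{0..1}"]) (auto intro: compact_Times)
    then have "uniform_limit D (\<lambda>n x. g (t n, (\<lambda>(c, \<eta>). (\<eta> i, \<eta> j)) x))
        (\<lambda>x. g (0, (\<lambda>(c, \<eta>). (\<eta> i, \<eta> j)) x)) F"
      by (rule uniform_limit_compose') (use that in \<open>auto simp: D_def\<close>)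
    then have lim: "uniform_limit D (\<lambda>n (c, \<eta>). g (t n, \<eta> i, \<eta> j)) (\<lambda>(c, \<eta>). g (0, \<eta> i, \<eta> j)) F"
      by (simp add: case_prod_beta')
    have "bounded ((\<lambda>(c, \<eta>). c i * c j) ` D)"
    proof -
      obtain M where "\<And>x. x \<in> C \<Longrightarrow> \<bar>x\<bar> \<le> M"
        using compact_imp_bounded[OF assms(1)] by (auto simp: bounded_iff)
      then have "\<bar>c i * c j\<bar> \<le> M * M" if "(c, \<eta>) \<in> D" for c \<eta>
        using that \<open>i < N\<close> \<open>j < N\<close> unfolding D_def abs_mult by (intro mult_mono) force+
      then show ?thesis unfolding bounded_iff by force
    qed
    moreover have "bounded ((\<lambda>(c, \<eta>). g (0, \<eta> i, \<eta> j)) ` D)"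
    proof (rule bounded_subset)
      show "bounded ((\<lambda>p. g (0, p)) ` (K \<times> K))"
        using assms(2,3) by (intro compact_imp_bounded compact_continuous_image compact_Times
            continuous_on_compose2[OF assms(3)] continuous_intros) auto
      show "(\<lambda>(c, \<eta>). g (0, \<eta> i, \<eta> j)) ` D \<subseteq> (\<lambda>p. g (0, p)) ` (K \<times> K)"
        using that by (auto simp: D_def)
    qed
    ultimately show ?thesis
      using uniform_lim_mult[OF uniform_limit_const lim] by (simp add: case_prod_beta')
  qed
  have "uniform_limit D (\<lambda>n x. \<Sum>i<N. \<Sum>j<N. (\<lambda>n (c, \<eta>). c i * c j * g (t n, \<eta> i, \<eta> j)) n x)
      (\<lambda>x. \<Sum>i<N. \<Sum>j<N. (\<lambda>(c, \<eta>). c i * c j * g (0, \<eta> i, \<eta> j)) x) F"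
    by (intro uniform_limit_sum summand finite_lessThan) auto
  then show ?thesis unfolding D_def by (simp add: case_prod_beta')
qed

lemma continuous_on_trace_kernel:
  assumes "\<bar>x0\<bar> < 2" "K \<subseteq> {z. 0 < Im z}"
  shows "continuous_on ({0..} \<times> (K \<times> K)) (\<lambda>p. trace_kernel x0 (fst p) (fst (snd p)) (snd (snd p)))"
  using isCont_trace_kernel[OF assms(1)] assms(2) by (intro continuous_at_imp_continuous_on) force

theorem lemma4p6:
  fixes x0 \<alpha> :: real and N :: nat and C :: "real set" and K :: "complex set"
  assumes "-2 < x0" "x0 < 2" "0 < \<alpha>" "\<alpha> < 1"
    and "compact C" and "compact K" and "K \<subseteq> {z. 0 < Im z}"
  shows "uniform_limit {(c, \<eta>). (\<forall>j<N. c j \<in> C \<and> \<eta> j \<in> K)}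
           (\<lambda>n (c, \<eta>). trace_HH (phi_n x0 \<alpha> N c \<eta> n) (tilde (phi_n x0 \<alpha> N c \<eta> n)))
           (\<lambda>(c, \<eta>). - (1/2) * (\<Sum>i<N. \<Sum>j<N. c i * c j * Re (1 / (\<eta> i - cnj (\<eta> j))\<^sup>2)))
           sequentially"
proof -
  \<comment> \<open>only \<open>0 < \<alpha>\<close> is needed: it makes \<open>t n = n\<^sup>-\<^sup>\<alpha>\<close> tend to 0\<close>
  define D where "D = {(c, \<eta>). \<forall>j<N. c j \<in> C \<and> \<eta> j \<in> K}"
  define t where "t n = 1 / real n powr \<alpha>" for n :: nat
  have x0: "\<bar>x0\<bar> < 2" using assms(1,2) by simp
  have t_lim: "(t \<longlongrightarrow> 0) sequentially"
    using tendsto_neg_powr[of "- \<alpha>", OF _ filterlim_real_sequentially] assms(3)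
    unfolding t_def[abs_def] by (simp add: powr_minus_divide)
  have t_ev: "eventually (\<lambda>n. t n \<in> {0..1}) sequentially"
    using eventually_ge_at_top[of 1] by eventually_elim (use assms(3) in \<open>simp add: t_def ge_one_powr_ge_zero\<close>)
  have cont: "continuous_on ({0..1} \<times> (K \<times> K)) (\<lambda>p. trace_kernel x0 (fst p) (fst (snd p)) (snd (snd p)))"
    by (rule continuous_on_subset[OF continuous_on_trace_kernel[OF x0 assms(7)]]) auto
  have kernel_limit: "uniform_limit D
      (\<lambda>n (c, \<eta>). \<Sum>i<N. \<Sum>j<N. c i * c j * trace_kernel x0 (t n) (\<eta> i) (\<eta> j))
      (\<lambda>(c, \<eta>). \<Sum>i<N. \<Sum>j<N. c i * c j * trace_kernel x0 0 (\<eta> i) (\<eta> j)) sequentially"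
    using uniform_limit_kernel_quadratic_form[OF assms(5,6) cont t_lim t_ev, of N] by (simp add: D_def)
  have ev: "eventually (\<lambda>n. \<forall>x\<in>D.
      (\<lambda>(c, \<eta>). \<Sum>i<N. \<Sum>j<N. c i * c j * trace_kernel x0 (t n) (\<eta> i) (\<eta> j)) x
      = (\<lambda>(c, \<eta>). trace_HH (phi_n x0 \<alpha> N c \<eta> n) (tilde (phi_n x0 \<alpha> N c \<eta> n))) x) sequentially"
  proof (rule eventually_mono[OF eventually_ge_at_top[of 1]], safe)
    fix n :: nat and c \<eta> assume "1 \<le> n" "(c, \<eta>) \<in> D"
    then have "\<And>j. j < N \<Longrightarrow> 0 < Im (\<eta> j)" using assms(7) by (auto simp: D_def)
    from trace_HH_phi_n_eq[OF x0 \<open>1 \<le> n\<close> this]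
    show "(\<Sum>i<N. \<Sum>j<N. c i * c j * trace_kernel x0 (t n) (\<eta> i) (\<eta> j))
        = trace_HH (phi_n x0 \<alpha> N c \<eta> n) (tilde (phi_n x0 \<alpha> N c \<eta> n))"
      by (simp add: t_def)
  qed
  have lim_eq: "(\<lambda>(c, \<eta>). \<Sum>i<N. \<Sum>j<N. c i * c j * trace_kernel x0 0 (\<eta> i) (\<eta> j)) x
      = (\<lambda>(c, \<eta>). - (1/2) * (\<Sum>i<N. \<Sum>j<N. c i * c j * Re (1 / (\<eta> i - cnj (\<eta> j))\<^sup>2))) x" for x
    unfolding case_prod_beta' trace_kernel_at_0[OF x0] sum_distrib_left by (simp add: mult_ac)
  show ?thesis
    unfolding D_def[symmetric] by (rule iffD1[OF uniform_limit_cong[OF ev lim_eq] kernel_limit])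
qed

end
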